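(* Let $\lambda>0$, let $\mathbf r_\lambda\in\mathfrak R$ be any point at which $f+\lambda g$ attains its minimum over $\mathfrak R$, and let $\mathbf r_\lambda(t)$, $t\ge0$, be the uniformly rotating trajectory generated by it (defined in the context). Then $f(\mathbf r_\lambda(t))=f_\lambda$ and $g(\mathbf r_\lambda(t))=g_\lambda$ are constant in $t$ and $$f_\lambda=\frac{C(\mathbf m)}{\sqrt{g_\lambda}}.$$
   Context: Fix $N\ge 2$, masses $\mathbf m=(m_1,\dots,m_N)$, $m_i>0$, and $\gamma>0$. Planar configuration space $\mathfrak R=\{\mathbf r=(\mathbf r_1,\dots,\mathbf r_N)\in(\mathbb R^2)^N:\ \mathbf r_i\neq\mathbf r_j \text{ for } i\neq j\}$; $f(\mathbf r)=\sum_{i<j}\frac{\gamma m_im_j}{|\mathbf r_j-\mathbf r_i|}$, $g(\mathbf r)=\sum_i m_i|\mathbf r_i|^2$. Let $C(\mathbf m)=\min\{f(\mathbf r):\mathbf r\in\mathfrak R,\ g(\mathbf r)=1\}$, so that $\min\{f(\mathbf r): g(\mathbf r)=g\}=C(\mathbf m)/\sqrt g$ for all $g>0$. For $\lambda>0$ and a minimizer $\mathbf r_\lambda=(\mathbf r_{1\lambda},\dots,\mathbf r_{N\lambda})$ of $f+\lambda g$ on $\mathfrak R$, writing $\mathbf r_{i\lambda}=|\mathbf r_{i\lambda}|(\cos\varphi_{i\lambda},\sin\varphi_{i\lambda})$ and $\omega=\sqrt{2\lambda}$, the generated trajectory is $\mathbf r_\lambda(t)=(\mathbf r_{1\lambda}(t),\dots,\mathbf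 r_{N\lambda}(t))$ with $\mathbf r_{i\lambda}(t)=|\mathbf r_{i\lambda}|(\cos(\varphi_{i\lambda}+\omega t),\sin(\varphi_{i\lambda}+\omega t))$; it solves $m_i\ddot{\mathbf r}_i=\sum_{j\ne i}\gamma m_im_j(\mathbf r_j-\mathbf r_i)/|\mathbf r_j-\mathbf r_i|^3$. *)

theory Defs
  imports Complex_Main
begin

text \<open>Planar configurations: the plane R^2 is identified with the complex numbers;
  bodies are indexed by 0..<N.\<close>

definition config :: "nat \<Rightarrow> (nat \<Rightarrow> complex) \<Rightarrow> bool" where
  "config N r \<longleftrightarrow> (\<forall>i<N. \<forall>j<N. i \<noteq> j \<longrightarrow> r i \<noteq> r j)"

definition fpot :: "real \<Rightarrow> (nat \<Rightarrow> real) \<Rightarrow> nat \<Rightarrow> (nat \<Rightarrow> complex) \<Rightarrow> real" where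
  "fpot \<gamma> m N r = (\<Sum>i<N. \<Sum>j<N. if i < j then \<gamma> * m i * m j / cmod (r j - r i) else 0)"

definition gmom :: "(nat \<Rightarrow> real) \<Rightarrow> nat \<Rightarrow> (nat \<Rightarrow> complex) \<Rightarrow> real" where
  "gmom m N r = (\<Sum>i<N. m i * (cmod (r i))\<^sup>2)"

text \<open>C(m) = min of f on the sphere g = 1 (written as an infimum; it is attained).\<close>
definition Cm :: "real \<Rightarrow> (nat \<Rightarrow> real) \<Rightarrow> nat \<Rightarrow> real" where
  "Cm \<gamma> m N = Inf (fpot \<gamma> m N ` {r. config N r \<and> gmom m N r = 1})"

definition traj :: "real \<Rightarrow> (nat \<Rightarrow> complex) \<Rightarrow> real \<Rightarrow> nat \<Rightarrow> complex" where
  "traj lam r t = (\<lambda>i. complex_of_real (cmod (r i)) * cis (Arg (r i) + sqrt (2 * lam) * t))"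

end

theory Submission
  imports Defs
begin

text \<open>A dilation \<open>r \<mapsto> c r\<close> divides \<open>f\<close> by \<open>|c|\<close> and multiplies \<open>g\<close> by \<open>|c|\<^sup>2\<close>, so rotations
  (\<open>|c| = 1\<close>) leave both invariant along the rotating trajectory. A minimiser of \<open>f + \<lambda> g\<close>
  minimises \<open>f\<close> on its own level set \<open>g = g\<^sub>\<lambda>\<close>, and dilating that level set onto \<open>g = 1\<close>
  shows \<open>C(m) = f\<^sub>\<lambda> \<surd>g\<^sub>\<lambda>\<close>.\<close>

lemma config_scale:
  assumes "config N r" "c \<noteq> 0"
  shows "config N (\<lambda>i. c * r i)"
  using assms unfolding config_def by auto

lemma fpot_scale:
  assumes "c \<noteq> 0"
  shows "fpot \<gamma> m N (\<lambda>i. c * r i) = fpot \<gamma> m N r / cmod c"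
proof -
  have "cmod (c * r j - c * r i) = cmod c * cmod (r j - r i)" for i j
    by (metis norm_mult right_diff_distrib)
  then show ?thesis
    unfolding fpot_def sum_divide_distrib using assms
    by (intro sum.cong refl) auto
qed

lemma gmom_scale: "gmom m N (\<lambda>i. c * r i) = (cmod c)\<^sup>2 * gmom m N r"
  unfolding gmom_def
  by (simp add: sum_distrib_left norm_mult power_mult_distrib algebra_simps)

lemma traj_eq_cis_mult: "traj lam r t = (\<lambda>i. cis (sqrt (2 * lam) * t) * r i)"
proof
  fix i
  show "traj lam r t i = cis (sqrt (2 * lam) * t) * r i"
  proof (cases "r i = 0")
    case True
    then show ?thesis unfolding traj_def by simp
  next
    case False
    have "traj lam r t i = complex_of_real (cmod (r i)) * cis (Arg (r i)) * cis (sqrt (2 * lam) * t)"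
      unfolding traj_def by (simp add: cis_mult mult.assoc)
    also have "complex_of_real (cmod (r i)) * cis (Arg (r i)) = r i"
      using False by (simp add: cis_Arg sgn_div_norm scaleR_conv_of_real field_simps)
    finally show ?thesis by simp
  qed
qed

lemma fpot_traj: "fpot \<gamma> m N (traj lam r t) = fpot \<gamma> m N r"
  by (simp add: traj_eq_cis_mult fpot_scale)

lemma gmom_traj: "gmom m N (traj lam r t) = gmom m N r"
  by (simp add: traj_eq_cis_mult gmom_scale)

lemma gmom_pos:
  assumes "N \<ge> 2" "\<forall>i<N. m i > 0" "config N r"
  shows "gmom m N r > 0"
proof -
  have "r 0 \<noteq> r 1"
    using assms(1,3) unfolding config_def by auto
  then obtain k where k: "k < 2" "r k \<noteq> 0"
    by (metis One_nat_def lessI numeral_2_eq_2 zero_less_Suc)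
  have "0 < m k * (cmod (r k))\<^sup>2"
    using k assms(1,2) by simp
  also have "\<dots> \<le> gmom m N r"
    unfolding gmom_def using k assms(1,2)
    by (intro member_le_sum[where f = "\<lambda>i. m i * (cmod (r i))\<^sup>2"]) (auto intro: less_imp_le)
  finally show ?thesis .
qed

lemma Cm_eq_level_minimum:
  assumes "config N r" "gmom m N r > 0"
    and min: "\<And>r'. config N r' \<Longrightarrow> gmom m N r' = gmom m N r \<Longrightarrow> fpot \<gamma> m N r \<le> fpot \<gamma> m N r'"
  shows "Cm \<gamma> m N = fpot \<gamma> m N r * sqrt (gmom m N r)"
proof -
  define s where "s = sqrt (gmom m N r)"
  have "s > 0" and s2: "s\<^sup>2 = gmom m N r"
    using assms(2) by (auto simp: s_def)
  let ?S = "{r. config N r \<and> gmom m N r = 1}"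
  have "fpot \<gamma> m N (\<lambda>i. of_real (1 / s) * r i) = fpot \<gamma> m N r * s"
    using \<open>s > 0\<close> by (subst fpot_scale) (auto simp: norm_divide)
  moreover have "(\<lambda>i. of_real (1 / s) * r i) \<in> ?S"
    using config_scale[OF assms(1)] \<open>s > 0\<close> s2 assms(2)
    by (simp add: gmom_scale norm_divide power_divide del: of_real_divide)
  ultimately have attained: "fpot \<gamma> m N r * s \<in> fpot \<gamma> m N ` ?S"
    by (metis image_eqI)
  have lower: "fpot \<gamma> m N r * s \<le> fpot \<gamma> m N r'" if "r' \<in> ?S" for r'
  proof -
    have "fpot \<gamma> m N r \<le> fpot \<gamma> m N (\<lambda>i. of_real s * r' i)"
      using that \<open>s > 0\<close> s2 by (intro min) (auto intro: config_scale simp: gmom_scale)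
    also have "\<dots> = fpot \<gamma> m N r' / s"
      using \<open>s > 0\<close> by (simp add: fpot_scale)
    finally show ?thesis
      using \<open>s > 0\<close> by (simp add: field_simps)
  qed
  show ?thesis
    unfolding Cm_def s_def[symmetric] using attained lower by (intro cInf_eq_minimum) auto
qed

theorem theorem4p2:
  fixes N :: nat and m :: "nat \<Rightarrow> real" and \<gamma> lam :: real and r :: "nat \<Rightarrow> complex"
  assumes "N \<ge> 2" and "\<forall>i<N. m i > 0" and "\<gamma> > 0" and "lam > 0"
    and "config N r"
    and "\<forall>r'. config N r' \<longrightarrow> fpot \<gamma> m N r + lam * gmom m N r \<le> fpot \<gamma> m N r' + lam * gmom m N r'"
  shows "\<exists>f_lam g_lam. (\<forall>t\<ge>0. fpot \<gamma> m N (traj lam r t) = f_lam \<and> gmom m N (traj lam r t) = g_lam)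
      \<and> f_lam = Cm \<gamma> m N / sqrt g_lam"
proof -
  have g_pos: "gmom m N r > 0"
    using assms(1,2,5) by (rule gmom_pos)
  have "Cm \<gamma> m N = fpot \<gamma> m N r * sqrt (gmom m N r)"
    using assms(5) g_pos by (rule Cm_eq_level_minimum) (use assms(6) in force)
  then have "fpot \<gamma> m N r = Cm \<gamma> m N / sqrt (gmom m N r)"
    using g_pos by simp
  then show ?thesis
    by (auto simp: fpot_traj gmom_traj)
qed

end
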